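(* Let $0<m<L$, $\alpha>0$, $\delta\in(0,1)$, and $\rho_\mathrm{GD}(\delta)=\max(1-\alpha m(1-\delta),\ \alpha L(1+\delta)-1)$. Define for $t,\lambda\in\mathbb{R}$ \[ F(t,\lambda) = -\alpha^2(L-m)^2+2mL\alpha^2\lambda(1-\delta^2) +2\alpha\lambda(m+L)(t-1) + \lambda(2-\delta^2\lambda)(t-1)^2, \] and \[ \rho_\star=\inf\{\rho\ge\rho_\mathrm{GD}(\delta):\ F(\rho,\lambda)\ge0 \text{ and } F(-\rho,\lambda)\ge0 \text{ for some }\lambda\in[0,2/\delta^2]\}. \] Let $\lambda_\star\in[0,2/\delta^2]$ be any number with $F(\rho_\star,\lambda_\star)\ge0$ and $F(-\rho_\star,\lambda_\star)\ge0$. Then: (1) $\min(F(\rho_\star,\lambda_\star),F(-\rho_\star,\lambda_\star))=0$; (2) $\lambda_\star\in(0,2/\delta^2)$; (3) if $\max(F(\rho_\star,\lambda_\star),F(-\rho_\star,\lambda_\star))>0$, then $\rho_\star=\rho_\mathrm{GD}(\delta)$.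
   Context: The infimum defining $\rho_\star$ is over a nonempty set, so $\rho_\star$ is finite, and by continuity of $F$ a number $\lambda_\star$ as in the statement exists. *)

theory Defs
  imports Complex_Main
begin

definition rho_GD :: "real \<Rightarrow> real \<Rightarrow> real \<Rightarrow> real \<Rightarrow> real" where
  "rho_GD m L \<alpha> \<delta> = max (1 - \<alpha> * m * (1 - \<delta>)) (\<alpha> * L * (1 + \<delta>) - 1)"

definition F :: "real \<Rightarrow> real \<Rightarrow> real \<Rightarrow> real \<Rightarrow> real \<Rightarrow> real \<Rightarrow> real" where
  "F m L \<alpha> \<delta> t lam =
     - (\<alpha>^2 * (L - m)^2) + 2 * m * L * \<alpha>^2 * lam * (1 - \<delta>^2)
     + 2 * \<alpha> * lam * (m + L) * (t - 1) + lam * (2 - \<delta>^2 * lam) * (t - 1)^2"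

definition rho_star :: "real \<Rightarrow> real \<Rightarrow> real \<Rightarrow> real \<Rightarrow> real" where
  "rho_star m L \<alpha> \<delta> = Inf {\<rho>. \<rho> \<ge> rho_GD m L \<alpha> \<delta> \<and>
      (\<exists>lam\<in>{0..2 / \<delta>^2}. F m L \<alpha> \<delta> \<rho> lam \<ge> 0 \<and> F m L \<alpha> \<delta> (-\<rho>) lam \<ge> 0)}"

end

theory Submission
  imports Defs
begin

text \<open>
  The endpoints of the multiplier range are infeasible: \<open>F(t, 0) = -\<alpha>\<^sup>2(L - m)\<^sup>2\<close>, and
  \<open>F(-\<rho>, 2/\<delta>\<^sup>2) < 0\<close> as soon as \<open>\<rho> \<ge> \<rho>\<^sub>G\<^sub>D\<close>. At \<open>\<rho>\<^sub>G\<^sub>D\<close> one of \<open>F(\<plusminus>\<rho>\<^sub>G\<^sub>D, \<lambda>)\<close> is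
  minus a square, and above \<open>\<rho>\<^sub>G\<^sub>D\<close> strict positivity of both \<open>F(\<rho>\<^sub>\<star>, \<lambda>)\<close> and
  \<open>F(-\<rho>\<^sub>\<star>, \<lambda>)\<close> would persist for slightly smaller \<open>\<rho>\<close> by continuity, contradicting
  the infimum; so the minimum vanishes. If only one of the two values vanishes,
  the \<open>\<lambda>\<close>-derivative of \<open>F\<close> there is nonzero, because the only zeros of \<open>F\<close> that are
  critical in \<open>\<lambda>\<close> are the two rates \<open>1 - \<alpha>m(1 - \<delta>)\<close> and \<open>1 - \<alpha>L(1 + \<delta>)\<close> defining
  \<open>\<rho>\<^sub>G\<^sub>D\<close>. Moving \<open>\<lambda>\<close> then makes both values positive, which is again impossible
  above \<open>\<rho>\<^sub>G\<^sub>D\<close>.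
\<close>

lemma frequently_gt_if_DERIV_nonzero:
  fixes f :: "real \<Rightarrow> real"
  assumes "DERIV f x :> D" and "D \<noteq> 0"
  shows "\<exists>\<^sub>F y in at x. f x < f y"
proof (rule ccontr)
  assume "\<not> (\<exists>\<^sub>F y in at x. f x < f y)"
  then have "\<forall>\<^sub>F y in at x. f y \<le> f x"
    by (simp add: not_frequently not_less)
  then obtain d where "d > 0" and "\<forall>y. y \<noteq> x \<and> dist y x < d \<longrightarrow> f y \<le> f x"
    by (auto simp: eventually_at)
  then have "\<forall>y. \<bar>x - y\<bar> < d \<longrightarrow> f y \<le> f x"
    by (metis dist_real_def abs_minus_commute order_refl)
  with DERIV_local_max[OF assms(1) \<open>d > 0\<close>] assms(2) show False
    by simp
qed

lemma tendsto_F_rate: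
  "(f \<longlongrightarrow> t) G \<Longrightarrow> ((\<lambda>x. F m L \<alpha> \<delta> (f x) lam) \<longlongrightarrow> F m L \<alpha> \<delta> t lam) G"
  unfolding F_def by (intro tendsto_intros)

lemma isCont_F_multiplier: "isCont (F m L \<alpha> \<delta> t) lam"
  unfolding F_def[abs_def] by (intro continuous_intros)

lemma F_multiplier_has_real_derivative:
  "DERIV (F m L \<alpha> \<delta> t) lam :>
     2 * m * L * \<alpha>^2 * (1 - \<delta>^2) + 2 * \<alpha> * (m + L) * (t - 1) + 2 * (t - 1)^2
     - 2 * \<delta>^2 * lam * (t - 1)^2"
  unfolding F_def[abs_def]
  by (auto intro!: derivative_eq_intros simp: algebra_simps power2_eq_square)

lemma F_multiplier_zero: "F m L \<alpha> \<delta> t 0 = - ((\<alpha> * (L - m))^2)"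
  unfolding F_def by (simp add: power_mult_distrib)

lemma F_lower_GD_rate:
  "F m L \<alpha> \<delta> (1 - \<alpha> * m * (1 - \<delta>)) lam = - ((\<alpha> * ((L - m) - lam * \<delta> * m * (1 - \<delta>)))^2)"
  unfolding F_def by (simp add: power2_eq_square algebra_simps)

lemma F_upper_GD_rate:
  "F m L \<alpha> \<delta> (1 - \<alpha> * L * (1 + \<delta>)) lam = - ((\<alpha> * ((L - m) - lam * \<delta> * L * (1 + \<delta>)))^2)"
  unfolding F_def by (simp add: power2_eq_square algebra_simps)

lemma F_multiplier_inverse_square:
  assumes "\<delta> \<noteq> 0"
  shows "\<delta>^2 * F m L \<alpha> \<delta> t (1 / \<delta>^2) =
    (t - 1) * (t - 1 + 2 * \<alpha> * (m + L)) + 2 * m * L * \<alpha>^2 * (1 - \<delta>^2) - \<delta>^2 * (\<alpha> * (L - m))^2"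
  unfolding F_def using assms by (simp add: field_simps power2_eq_square)

lemma F_multiplier_max:
  assumes "\<delta> \<noteq> 0"
  shows "\<delta>^2 * F m L \<alpha> \<delta> t (2 / \<delta>^2) =
    4 * \<alpha> * (m * L * \<alpha> * (1 - \<delta>^2) + (m + L) * (t - 1)) - \<delta>^2 * (\<alpha> * (L - m))^2"
  unfolding F_def using assms by (simp add: field_simps power2_eq_square)

lemma F_multiplier_max_neg:
  assumes "0 < m" "m < L" "0 < \<alpha>" "0 < \<delta>" "\<delta> < 1"
    and "\<alpha> * L * (1 + \<delta>) - 1 \<le> r"
  shows "F m L \<alpha> \<delta> (- r) (2 / \<delta>^2) < 0"
proof -
  have "m * L * \<alpha> * (1 - \<delta>^2) = (m * (1 - \<delta>)) * (\<alpha> * L * (1 + \<delta>))"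
    by (simp add: power2_eq_square algebra_simps)
  also have "\<dots> < (m + L) * (\<alpha> * L * (1 + \<delta>))"
  proof (rule mult_strict_right_mono)
    show "m * (1 - \<delta>) < m + L" "0 < \<alpha> * L * (1 + \<delta>)"
      using assms by (simp_all add: algebra_simps add_pos_pos)
  qed
  also have "\<dots> \<le> (m + L) * (r + 1)"
    using assms by (intro mult_left_mono) simp_all
  finally have "m * L * \<alpha> * (1 - \<delta>^2) + (m + L) * (- r - 1) < 0"
    by (simp add: algebra_simps)
  with assms have "4 * \<alpha> * (m * L * \<alpha> * (1 - \<delta>^2) + (m + L) * (- r - 1)) < 0"
    by (simp add: mult_pos_neg)
  moreover have "\<delta>^2 * F m L \<alpha> \<delta> (- r) (2 / \<delta>^2) =
      4 * \<alpha> * (m * L * \<alpha> * (1 - \<delta>^2) + (m + L) * (- r - 1)) - \<delta>^2 * (\<alpha> * (L - m))^2"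
    by (rule F_multiplier_max) (use assms in simp)
  moreover have "0 \<le> \<delta>^2 * (\<alpha> * (L - m))^2"
    by simp
  ultimately have "\<delta>^2 * F m L \<alpha> \<delta> (- r) (2 / \<delta>^2) < 0"
    by linarith
  then show ?thesis
    by (simp add: mult_less_0_iff)
qed

text \<open>
  Writing \<open>u = t - 1\<close>, a zero that is critical in \<open>\<lambda>\<close> satisfies \<open>\<delta>\<lambda>u = \<plusminus>\<alpha>(L - m)\<close>;
  substituting this back, the critical-point equation factors into two linear
  factors in \<open>u\<close>, whose roots are the two rates in \<open>\<rho>\<^sub>G\<^sub>D\<close> (the sign \<open>+\<close> forces
  \<open>u > 0\<close>, where the factors are positive).
\<close>

lemma F_critical_zero_cases:
  assumes "0 < m" "m < L" "0 < \<alpha>" "0 < \<delta>" "\<delta> < 1" "0 < lam"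
    and zero: "F m L \<alpha> \<delta> t lam = 0"
    and critical: "2 * m * L * \<alpha>^2 * (1 - \<delta>^2) + 2 * \<alpha> * (m + L) * (t - 1) + 2 * (t - 1)^2
      - 2 * \<delta>^2 * lam * (t - 1)^2 = 0"
  shows "t = 1 - \<alpha> * m * (1 - \<delta>) \<or> t = 1 - \<alpha> * L * (1 + \<delta>)"
proof -
  define u where "u = t - 1"
  define B where "B = 2 * m * L * \<alpha>^2 * (1 - \<delta>^2) + 2 * \<alpha> * (m + L) * u + 2 * u^2"
  have B: "B = 2 * \<delta> * (\<delta> * lam * u) * u"
    using critical unfolding B_def u_def by (simp add: power2_eq_square algebra_simps)
  have "F m L \<alpha> \<delta> t lam = - ((\<alpha> * (L - m))^2) + lam * B - (\<delta> * lam * u)^2"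
    unfolding F_def B_def u_def by (simp add: algebra_simps power2_eq_square)
  with zero B have "(\<delta> * lam * u)^2 = (\<alpha> * (L - m))^2"
    by (simp add: power2_eq_square algebra_simps)
  then consider "\<delta> * lam * u = \<alpha> * (L - m)" | "\<delta> * lam * u = - (\<alpha> * (L - m))"
    using power2_eq_iff by blast
  then show ?thesis
  proof cases
    case 1
    with assms have "0 < \<delta> * lam * u" "0 < \<delta> * lam"
      by simp_all
    then have "0 < u"
      by (rule zero_less_mult_pos)
    from B 1 have "B = 2 * \<delta> * (\<alpha> * (L - m)) * u"
      by simp
    then have "2 * (u + \<alpha> * L * (1 - \<delta>)) * (u + \<alpha> * m * (1 + \<delta>)) = 0"
      unfolding B_def by (simp add: algebra_simps power2_eq_square)
    moreover have "0 < u + \<alpha> * L * (1 - \<delta>)" "0 < u + \<alpha> * m * (1 + \<delta>)"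
      using \<open>0 < u\<close> assms by (simp_all add: add_pos_pos)
    ultimately show ?thesis
      by simp
  next
    case 2
    from B 2 have "B = - (2 * \<delta> * (\<alpha> * (L - m)) * u)"
      by simp
    then have "2 * (u + \<alpha> * L * (1 + \<delta>)) * (u + \<alpha> * m * (1 - \<delta>)) = 0"
      unfolding B_def by (simp add: algebra_simps power2_eq_square)
    then have "u + \<alpha> * L * (1 + \<delta>) = 0 \<or> u + \<alpha> * m * (1 - \<delta>) = 0"
      by (simp only: mult_eq_0_iff) linarith
    then show ?thesis
      unfolding u_def by linarith
  qed
qed

lemma F_critical_zero_bounded:
  assumes "0 < m" "m < L" "0 < \<alpha>" "0 < \<delta>" "\<delta> < 1" "0 < lam"
    and "F m L \<alpha> \<delta> t lam = 0" and "DERIV (F m L \<alpha> \<delta> t) lam :> 0"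
  shows "\<bar>t\<bar> \<le> rho_GD m L \<alpha> \<delta>"
proof -
  have "t = 1 - \<alpha> * m * (1 - \<delta>) \<or> t = 1 - \<alpha> * L * (1 + \<delta>)"
    using F_critical_zero_cases[OF assms(1-7)]
      DERIV_unique[OF assms(8) F_multiplier_has_real_derivative] by simp
  moreover have "\<alpha> * m * (1 - \<delta>) < \<alpha> * L * (1 + \<delta>)"
    using assms by (intro mult_strict_left_mono mult_strict_mono) simp_all
  ultimately show ?thesis
    unfolding rho_GD_def by auto
qed

lemma F_perturb_multiplier:
  assumes "0 < m" "m < L" "0 < \<alpha>" "0 < \<delta>" "\<delta> < 1" "lam \<in> {0<..<2 / \<delta>^2}"
    and "F m L \<alpha> \<delta> s lam = 0" and "0 < F m L \<alpha> \<delta> s' lam"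
    and "rho_GD m L \<alpha> \<delta> < \<bar>s\<bar>"
  shows "\<exists>y\<in>{0..2 / \<delta>^2}. 0 < F m L \<alpha> \<delta> s y \<and> 0 < F m L \<alpha> \<delta> s' y"
proof -
  obtain D where D: "DERIV (F m L \<alpha> \<delta> s) lam :> D"
    using F_multiplier_has_real_derivative by (rule that)
  have "D \<noteq> 0"
  proof
    assume "D = 0"
    with D assms(6) have "\<bar>s\<bar> \<le> rho_GD m L \<alpha> \<delta>"
      using F_critical_zero_bounded[OF assms(1-5) _ assms(7)] by simp
    with assms(9) show False
      by simp
  qed
  then have "\<exists>\<^sub>F y in at lam. 0 < F m L \<alpha> \<delta> s y"
    using frequently_gt_if_DERIV_nonzero[OF D] assms(7) by simp
  moreover have "\<forall>\<^sub>F y in at lam. y \<in> {0<..<2 / \<delta>^2} \<and> 0 < F m L \<alpha> \<delta> s' y"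
    using eventually_at_in_open'[OF open_greaterThanLessThan assms(6)]
      order_tendstoD(1)[OF isCont_F_multiplier[unfolded isCont_def] assms(8)]
    by (rule eventually_conj)
  ultimately have "\<exists>\<^sub>F y in at lam. (y \<in> {0<..<2 / \<delta>^2} \<and> 0 < F m L \<alpha> \<delta> s' y)
      \<and> 0 < F m L \<alpha> \<delta> s y"
    by (rule frequently_eventually_conj)
  then show ?thesis
    by (auto dest!: frequently_ex)
qed

definition feasible_rate :: "real \<Rightarrow> real \<Rightarrow> real \<Rightarrow> real \<Rightarrow> real \<Rightarrow> bool" where
  "feasible_rate m L \<alpha> \<delta> \<rho> \<longleftrightarrow>
     (\<exists>lam\<in>{0..2 / \<delta>^2}. 0 \<le> F m L \<alpha> \<delta> \<rho> lam \<and> 0 \<le> F m L \<alpha> \<delta> (- \<rho>) lam)"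

lemma rho_star_eq_Inf:
  "rho_star m L \<alpha> \<delta> = Inf {\<rho>. rho_GD m L \<alpha> \<delta> \<le> \<rho> \<and> feasible_rate m L \<alpha> \<delta> \<rho>}"
  unfolding rho_star_def feasible_rate_def ..

lemma feasible_rate_exists:
  assumes "0 < m" "m < L" "0 < \<alpha>" "0 < \<delta>" "\<delta> < 1"
  shows "\<exists>\<rho>. rho_GD m L \<alpha> \<delta> \<le> \<rho> \<and> feasible_rate m L \<alpha> \<delta> \<rho>"
proof (intro exI conjI)
  define c where "c = \<alpha> * (m + L)"
  have "0 \<le> c" "\<alpha> * (L - m) \<le> c" "0 < \<delta>^2" "\<delta>^2 \<le> 1"
    using assms by (simp_all add: c_def algebra_simps power_le_one)
  then have bound: "(\<alpha> * (L - m))^2 \<le> c^2" "0 \<le> 2 * m * L * \<alpha>^2 * (1 - \<delta>^2)"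
      "\<delta>^2 * (\<alpha> * (L - m))^2 \<le> (\<alpha> * (L - m))^2"
    using assms by (simp_all add: power_mono mult_left_le_one_le)
  have "0 \<le> F m L \<alpha> \<delta> t (1 / \<delta>^2)" if "c^2 \<le> (t - 1) * (t - 1 + 2 * c)" for t
  proof -
    have "\<delta>^2 * F m L \<alpha> \<delta> t (1 / \<delta>^2) =
        (t - 1) * (t - 1 + 2 * c) + 2 * m * L * \<alpha>^2 * (1 - \<delta>^2) - \<delta>^2 * (\<alpha> * (L - m))^2"
      using F_multiplier_inverse_square[of \<delta> m L \<alpha> t] assms(4) unfolding c_def
      by (simp add: mult.assoc)
    with bound that have "0 \<le> \<delta>^2 * F m L \<alpha> \<delta> t (1 / \<delta>^2)"
      by linarith
    with \<open>0 < \<delta>^2\<close> show ?thesis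
      by (simp add: zero_le_mult_iff)
  qed
  moreover have "c^2 \<le> (1 + 3 * c - 1) * (1 + 3 * c - 1 + 2 * c)"
      "c^2 \<le> (- (1 + 3 * c) - 1) * (- (1 + 3 * c) - 1 + 2 * c)"
    using \<open>0 \<le> c\<close> by (simp_all add: power2_eq_square algebra_simps)
  moreover have "1 / \<delta>^2 \<in> {0..2 / \<delta>^2}"
    using \<open>0 < \<delta>^2\<close> by (simp add: divide_right_mono)
  ultimately show "feasible_rate m L \<alpha> \<delta> (1 + 3 * c)"
    unfolding feasible_rate_def by blast
  have "\<alpha> * L * (1 + \<delta>) \<le> \<alpha> * L * 2"
    using assms by (intro mult_left_mono) auto
  also have "\<dots> \<le> 2 * c"
    using assms by (simp add: c_def algebra_simps)
  finally have "\<alpha> * L * (1 + \<delta>) \<le> 2 * c" .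
  moreover have "0 \<le> \<alpha> * m * (1 - \<delta>)"
    using assms by (intro mult_nonneg_nonneg) auto
  ultimately show "rho_GD m L \<alpha> \<delta> \<le> 1 + 3 * c"
    using \<open>0 \<le> c\<close> unfolding rho_GD_def max.bounded_iff by linarith
qed

lemma rho_star_le:
  "rho_GD m L \<alpha> \<delta> \<le> \<rho> \<Longrightarrow> feasible_rate m L \<alpha> \<delta> \<rho> \<Longrightarrow> rho_star m L \<alpha> \<delta> \<le> \<rho>"
  unfolding rho_star_eq_Inf by (rule cInf_lower) (auto simp: bdd_below_def)

lemma rho_GD_le_rho_star:
  assumes "0 < m" "m < L" "0 < \<alpha>" "0 < \<delta>" "\<delta> < 1"
  shows "rho_GD m L \<alpha> \<delta> \<le> rho_star m L \<alpha> \<delta>"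
  unfolding rho_star_eq_Inf using feasible_rate_exists[OF assms] by (auto intro: cInf_greatest)

lemma rho_GD_not_strictly_feasible:
  "\<not> (0 < F m L \<alpha> \<delta> (rho_GD m L \<alpha> \<delta>) lam \<and> 0 < F m L \<alpha> \<delta> (- rho_GD m L \<alpha> \<delta>) lam)"
  by (cases "1 - \<alpha> * m * (1 - \<delta>) \<le> \<alpha> * L * (1 + \<delta>) - 1")
    (simp_all add: rho_GD_def F_lower_GD_rate F_upper_GD_rate not_less)

lemma rho_star_not_strictly_feasible:
  assumes "rho_GD m L \<alpha> \<delta> < rho_star m L \<alpha> \<delta>" and "lam \<in> {0..2 / \<delta>^2}"
  shows "\<not> (0 < F m L \<alpha> \<delta> (rho_star m L \<alpha> \<delta>) lam \<and> 0 < F m L \<alpha> \<delta> (- rho_star m L \<alpha> \<delta>) lam)"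
proof
  let ?rs = "rho_star m L \<alpha> \<delta>"
  assume pos: "0 < F m L \<alpha> \<delta> ?rs lam \<and> 0 < F m L \<alpha> \<delta> (- ?rs) lam"
  have "((\<lambda>\<rho>. \<rho>) \<longlongrightarrow> ?rs) (at_left ?rs)" "((\<lambda>\<rho>. - \<rho>) \<longlongrightarrow> - ?rs) (at_left ?rs)"
    by (auto intro: tendsto_intros)
  then have "\<forall>\<^sub>F \<rho> in at_left ?rs. \<rho> \<in> {rho_GD m L \<alpha> \<delta><..<?rs}
      \<and> 0 < F m L \<alpha> \<delta> \<rho> lam \<and> 0 < F m L \<alpha> \<delta> (- \<rho>) lam"
    using eventually_at_left_real[OF assms(1)] pos
    by (intro eventually_conj order_tendstoD(1)[OF tendsto_F_rate]) auto
  then obtain \<rho> where "\<rho> \<in> {rho_GD m L \<alpha> \<delta><..<?rs}"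
      "0 < F m L \<alpha> \<delta> \<rho> lam" "0 < F m L \<alpha> \<delta> (- \<rho>) lam"
    using eventually_happens' trivial_limit_at_left_real by blast
  with rho_star_le[of m L \<alpha> \<delta> \<rho>] assms(2) show False
    unfolding feasible_rate_def by force
qed

lemma rho_star_min_F_nonpos:
  assumes "0 < m" "m < L" "0 < \<alpha>" "0 < \<delta>" "\<delta> < 1" "lam \<in> {0..2 / \<delta>^2}"
  shows "min (F m L \<alpha> \<delta> (rho_star m L \<alpha> \<delta>) lam) (F m L \<alpha> \<delta> (- rho_star m L \<alpha> \<delta>) lam) \<le> 0"
  using rho_GD_le_rho_star[OF assms(1-5)] rho_star_not_strictly_feasible[OF _ assms(6)]
    rho_GD_not_strictly_feasible[of m L \<alpha> \<delta> lam]
  by (cases "rho_GD m L \<alpha> \<delta> = rho_star m L \<alpha> \<delta>") (auto simp: min_le_iff_disj not_less)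

theorem lemma3p1:
  fixes m L \<alpha> \<delta> lams :: real
  assumes "0 < m" and "m < L" and "\<alpha> > 0" and "0 < \<delta>" and "\<delta> < 1"
    and "lams \<in> {0..2 / \<delta>^2}"
    and "F m L \<alpha> \<delta> (rho_star m L \<alpha> \<delta>) lams \<ge> 0"
    and "F m L \<alpha> \<delta> (- rho_star m L \<alpha> \<delta>) lams \<ge> 0"
  shows "min (F m L \<alpha> \<delta> (rho_star m L \<alpha> \<delta>) lams) (F m L \<alpha> \<delta> (- rho_star m L \<alpha> \<delta>) lams) = 0
    \<and> lams \<in> {0<..<2 / \<delta>^2}
    \<and> (max (F m L \<alpha> \<delta> (rho_star m L \<alpha> \<delta>) lams) (F m L \<alpha> \<delta> (- rho_star m L \<alpha> \<delta>) lams) > 0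
         \<longrightarrow> rho_star m L \<alpha> \<delta> = rho_GD m L \<alpha> \<delta>)"
proof -
  let ?rs = "rho_star m L \<alpha> \<delta>" and ?F = "F m L \<alpha> \<delta>"
  have min_zero: "min (?F ?rs lams) (?F (- ?rs) lams) = 0"
    using rho_star_min_F_nonpos[OF assms(1-6)] assms(7,8) by linarith
  have ge_GD: "rho_GD m L \<alpha> \<delta> \<le> ?rs"
    using rho_GD_le_rho_star[OF assms(1-5)] .
  have "lams \<noteq> 0"
    using assms(2,3,7) by (auto simp: F_multiplier_zero)
  moreover have "lams \<noteq> 2 / \<delta>^2"
    using F_multiplier_max_neg[OF assms(1-5), of ?rs] ge_GD assms(8)
    unfolding rho_GD_def by force
  ultimately have interior: "lams \<in> {0<..<2 / \<delta>^2}"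
    using assms(6) by auto
  have "?rs = rho_GD m L \<alpha> \<delta>" if "0 < max (?F ?rs lams) (?F (- ?rs) lams)"
  proof (rule ccontr)
    assume "?rs \<noteq> rho_GD m L \<alpha> \<delta>"
    with ge_GD have gt_GD: "rho_GD m L \<alpha> \<delta> < ?rs" by simp
    from min_zero that assms(7,8) obtain s where s: "s = ?rs \<or> s = - ?rs"
        "?F s lams = 0" "0 < ?F (- s) lams"
      by (metis minus_minus min_def max_def order_less_le)
    with F_perturb_multiplier[OF assms(1-5) interior] gt_GD obtain y
      where "y \<in> {0..2 / \<delta>^2}" "0 < ?F s y" "0 < ?F (- s) y" by force
    with rho_star_not_strictly_feasible[OF gt_GD] s(1) show False
      by auto
  qed
  with min_zero interior show ?thesis by blast
qed

end
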